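(* Let $n\ge2$ and $U=\exp\!\big(i\frac{\pi}{3\sqrt3}\sum_{j=1}^n j\,(X_j+Y_j+Z_j)\big)$. Then the map $a\mapsto UaU^\dagger$ restricts to a Lie algebra isomorphism from $\mathfrak a_{10}(n)$ onto $\mathfrak a_7(n)$.
   Context: Pauli matrices $I,X,Y,Z$; $A_j$ is $A$ acting on qubit $j$ (identity elsewhere); $A_jB_{j+1}$ denotes the length-$n$ Pauli string with $A$ at position $j$, $B$ at $j+1$, $I$ elsewhere. For a set $S$ of Pauli strings, $\mathrm{Lie}\langle S\rangle$ is the smallest real Lie subalgebra of $\mathfrak u(2^n)$ containing $\{iP:P\in S\}$. $\mathfrak a_{10}(n)=\mathrm{Lie}\langle X_jY_{j+1},Y_jZ_{j+1},Z_jX_{j+1}:1\le j\le n-1\rangle$ and $\mathfrak a_7(n)=\mathrm{Lie}\langle X_jX_{j+1},Y_jY_{j+1},Z_jZ_{j+1}:1\le j\le n-1\rangle$. *)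

theory Defs
  imports "Jordan_Normal_Form.Matrix" Complex_Main
begin

datatype pauli = PI | PX | PY | PZ

fun pauli_entry :: "pauli \<Rightarrow> nat \<Rightarrow> nat \<Rightarrow> complex" where
  "pauli_entry PI r c = (if r = c then 1 else 0)"
| "pauli_entry PX r c = (if r \<noteq> c then 1 else 0)"
| "pauli_entry PY r c = (if r = c then 0 else if r = 0 then - \<i> else \<i>)"
| "pauli_entry PZ r c = (if r = c then (if r = 0 then 1 else -1) else 0)"

text \<open>Bit of basis index k belonging to qubit j (1 \<le> j \<le> n); qubit 1 is the most significant
  tensor factor.\<close>
definition qbit :: "nat \<Rightarrow> nat \<Rightarrow> nat \<Rightarrow> nat" where
  "qbit n j k = (k div 2 ^ (n - j)) mod 2"

text \<open>The Pauli string (tensor product) with label p j at position j, for j = 1..n,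
  as a 2^n x 2^n complex matrix.\<close>
definition pauli_string :: "nat \<Rightarrow> (nat \<Rightarrow> pauli) \<Rightarrow> complex mat" where
  "pauli_string n p = mat (2 ^ n) (2 ^ n)
     (\<lambda>(r, c). \<Prod>j\<in>{1..n}. pauli_entry (p j) (qbit n j r) (qbit n j c))"

definition single :: "nat \<Rightarrow> pauli \<Rightarrow> nat \<Rightarrow> complex mat" where
  "single n A j = pauli_string n (\<lambda>k. if k = j then A else PI)"

definition two_site :: "nat \<Rightarrow> pauli \<Rightarrow> pauli \<Rightarrow> nat \<Rightarrow> complex mat" where
  "two_site n A B j = pauli_string n (\<lambda>k. if k = j then A else if k = j + 1 then B else PI)"

definition commutator :: "complex mat \<Rightarrow> complex mat \<Rightarrow> complex mat" where
  "commutator a b = a * b - b * a"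

text \<open>Smallest set of N x N complex matrices containing G that is a real subspace
  closed under the commutator bracket (i.e. the real Lie algebra generated by G).\<close>
inductive_set lie_closure :: "nat \<Rightarrow> complex mat set \<Rightarrow> complex mat set"
  for N :: nat and G :: "complex mat set" where
  gen: "a \<in> G \<Longrightarrow> a \<in> lie_closure N G"
| zero: "0\<^sub>m N N \<in> lie_closure N G"
| add: "a \<in> lie_closure N G \<Longrightarrow> b \<in> lie_closure N G \<Longrightarrow> a + b \<in> lie_closure N G"
| smult: "a \<in> lie_closure N G \<Longrightarrow> complex_of_real r \<cdot>\<^sub>m a \<in> lie_closure N G"
| bracket: "a \<in> lie_closure N G \<Longrightarrow> b \<in> lie_closure N G \<Longrightarrow> commutator a b \<in> lie_closure N G"

definition pauli_lie :: "nat \<Rightarrow> complex mat set \<Rightarrow> complex mat set" where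
  "pauli_lie n S = lie_closure (2 ^ n) ((\<lambda>P. \<i> \<cdot>\<^sub>m P) ` S)"

definition a10 :: "nat \<Rightarrow> complex mat set" where
  "a10 n = pauli_lie n (\<Union>j\<in>{1..n-1}.
      {two_site n PX PY j, two_site n PY PZ j, two_site n PZ PX j})"

definition a7 :: "nat \<Rightarrow> complex mat set" where
  "a7 n = pauli_lie n (\<Union>j\<in>{1..n-1}.
      {two_site n PX PX j, two_site n PY PY j, two_site n PZ PZ j})"

definition mat_exp :: "complex mat \<Rightarrow> complex mat" where
  "mat_exp A = mat (dim_row A) (dim_col A) (\<lambda>(i, j). \<Sum>k. (A ^\<^sub>m k) $$ (i, j) / of_nat (fact k))"

definition adjoint :: "complex mat \<Rightarrow> complex mat" where
  "adjoint A = mat (dim_col A) (dim_row A) (\<lambda>(i, j). cnj (A $$ (j, i)))"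

definition mat_sum :: "nat \<Rightarrow> nat \<Rightarrow> (nat \<Rightarrow> complex mat) \<Rightarrow> complex mat" where
  "mat_sum N n f = foldr (\<lambda>j acc. f j + acc) [1..<Suc n] (0\<^sub>m N N)"

definition U_gate :: "nat \<Rightarrow> complex mat" where
  "U_gate n = mat_exp ((\<i> * complex_of_real (pi / (3 * sqrt 3))) \<cdot>\<^sub>m
      mat_sum (2 ^ n) n (\<lambda>j. of_nat j \<cdot>\<^sub>m (single n PX j + single n PY j + single n PZ j)))"

end

theory Submission
  imports Defs
begin

text \<open>The single-qubit operator S = X + Y + Z has eigenvalues \<plusminus>\<surd>3, so C = exp (i\<pi>/(3\<surd>3) S) has
  eigenvalues e^(\<plusminus>i\<pi>/3) on the same eigenvectors; C is the Clifford gate that permutes the Pauli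
  matrices cyclically under conjugation, X \<mapsto> Z \<mapsto> Y \<mapsto> X. The summands of the exponent of U act on
  different qubits and are diagonalised simultaneously by the tensor power of an eigenbasis of S, hence
  U = C^1 \<otimes> C^2 \<otimes> ... \<otimes> C^n. Conjugation by U therefore sends A_j B_(j+1) to C^j(A)_j C^(j+1)(B)_(j+1),
  which maps the generators X_j Y_(j+1), Y_j Z_(j+1), Z_j X_(j+1) of a10 onto the generators
  P_j P_(j+1) of a7. Being conjugation by a unitary, it is an injective Lie algebra homomorphism, and such
  a map sends the Lie algebra generated by a set onto the Lie algebra generated by its image.\<close>

lemma qbit_less_2 [simp]: "qbit n j k < 2"
  by (simp add: qbit_def)

lemma qbit_Suc: "1 \<le> j \<Longrightarrow> j \<le> n \<Longrightarrow> qbit (Suc n) j k = qbit n j (k div 2)"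
  by (simp add: qbit_def Suc_diff_le div_mult2_eq)

lemma qbit_Suc_last: "qbit (Suc n) (Suc n) k = k mod 2"
  by (simp add: qbit_def)

lemma prod_qbit_Suc:
  "(\<Prod>j\<in>{1..Suc n}. h j (qbit (Suc n) j k)) = (\<Prod>j\<in>{1..n}. h j (qbit n j (k div 2))) * h (Suc n) (k mod 2)"
proof -
  have "(\<Prod>j\<in>{1..n}. h j (qbit (Suc n) j k)) = (\<Prod>j\<in>{1..n}. h j (qbit n j (k div 2)))"
    by (rule prod.cong) (auto simp: qbit_Suc)
  thus ?thesis by (simp add: prod.nat_ivl_Suc' qbit_Suc_last mult.commute)
qed

lemma sum_prod_qbit:
  fixes h :: "nat \<Rightarrow> nat \<Rightarrow> 'a :: comm_semiring_1"
  shows "(\<Sum>k<2^n. \<Prod>j\<in>{1..n}. h j (qbit n j k)) = (\<Prod>j\<in>{1..n}. h j 0 + h j 1)"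
proof (induction n)
  case 0 then show ?case by simp
next
  case (Suc n)
  have split: "(\<Sum>k<2 * M. F k) = (\<Sum>m<M. F (2 * m) + F (2 * m + 1))" for M and F :: "nat \<Rightarrow> 'a"
    by (induction M) (auto simp: add_ac)
  have "(\<Sum>k<2^Suc n. \<Prod>j\<in>{1..Suc n}. h j (qbit (Suc n) j k))
      = (\<Sum>m<2^n. (\<Prod>j\<in>{1..n}. h j (qbit n j m)) * (h (Suc n) 0 + h (Suc n) 1))"
    unfolding power_Suc split prod_qbit_Suc by (simp add: ring_distribs)
  also have "\<dots> = (\<Prod>j\<in>{1..n}. h j 0 + h j 1) * (h (Suc n) 0 + h (Suc n) 1)"
    by (simp only: sum_distrib_right[symmetric] Suc.IH)
  finally show ?case by (simp add: prod.nat_ivl_Suc' mult.commute)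
qed

lemma eq_if_qbits_eq:
  "r < 2^n \<Longrightarrow> c < 2^n \<Longrightarrow> (\<forall>j\<in>{1..n}. qbit n j r = qbit n j c) \<Longrightarrow> r = c"
proof (induction n arbitrary: r c)
  case 0 then show ?case by simp
next
  case (Suc n)
  have "r div 2 = c div 2"
    by (rule Suc.IH) (use Suc.prems in \<open>auto simp: less_mult_imp_div_less qbit_Suc[symmetric]\<close>)
  moreover have "r mod 2 = c mod 2"
    using bspec[OF Suc.prems(3), of "Suc n"] by (simp add: qbit_Suc_last)
  ultimately show ?case by (metis div_mult_mod_eq)
qed

section \<open>Tensor products of single-qubit matrices\<close>

definition tensor_mat :: "nat \<Rightarrow> (nat \<Rightarrow> 'a :: comm_semiring_1 mat) \<Rightarrow> 'a mat" where
  "tensor_mat n f = mat (2^n) (2^n) (\<lambda>(r, c). \<Prod>j\<in>{1..n}. f j $$ (qbit n j r, qbit n j c))"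

lemma tensor_mat_carrier [simp]: "tensor_mat n f \<in> carrier_mat (2^n) (2^n)"
  and tensor_mat_dim [simp]: "dim_row (tensor_mat n f) = 2^n" "dim_col (tensor_mat n f) = 2^n"
  by (simp_all add: tensor_mat_def)

lemma tensor_mat_index:
  "r < 2^n \<Longrightarrow> c < 2^n \<Longrightarrow> tensor_mat n f $$ (r, c) = (\<Prod>j\<in>{1..n}. f j $$ (qbit n j r, qbit n j c))"
  by (simp add: tensor_mat_def)

lemma tensor_mat_cong:
  "(\<And>j. j \<in> {1..n} \<Longrightarrow> f j = g j) \<Longrightarrow> tensor_mat n f = tensor_mat n g"
  unfolding tensor_mat_def by (auto intro!: cong[of "mat _ _"] prod.cong)

lemma index_mult_mat_2:
  "A \<in> carrier_mat 2 2 \<Longrightarrow> B \<in> carrier_mat 2 2 \<Longrightarrow> a < 2 \<Longrightarrow> b < 2 \<Longrightarrow>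
   (A * B) $$ (a, b) = A $$ (a, 0) * B $$ (0, b) + A $$ (a, 1) * B $$ (1, b)"
  by (simp add: scalar_prod_def numeral_2_eq_2)

lemma tensor_mat_mult:
  assumes "\<And>j. j \<in> {1..n} \<Longrightarrow> f j \<in> carrier_mat 2 2" "\<And>j. j \<in> {1..n} \<Longrightarrow> g j \<in> carrier_mat 2 2"
  shows "tensor_mat n f * tensor_mat n g = tensor_mat n (\<lambda>j. f j * g j)"
proof (rule eq_matI)
  fix r c assume "r < dim_row (tensor_mat n (\<lambda>j. f j * g j))" "c < dim_col (tensor_mat n (\<lambda>j. f j * g j))"
  hence r: "r < 2^n" and c: "c < 2^n" by auto
  have "(tensor_mat n f * tensor_mat n g) $$ (r, c) = (\<Sum>k<2^n. tensor_mat n f $$ (r, k) * tensor_mat n g $$ (k, c))"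
    using r c by (simp add: scalar_prod_def atLeast0LessThan)
  also have "\<dots> = (\<Sum>k<2^n. \<Prod>j\<in>{1..n}.
      (\<lambda>j b. f j $$ (qbit n j r, b) * g j $$ (b, qbit n j c)) j (qbit n j k))"
    using r c by (intro sum.cong refl) (simp add: tensor_mat_index prod.distrib)
  also have "\<dots> = (\<Prod>j\<in>{1..n}. f j $$ (qbit n j r, 0) * g j $$ (0, qbit n j c)
                               + f j $$ (qbit n j r, 1) * g j $$ (1, qbit n j c))"
    by (rule sum_prod_qbit)
  also have "\<dots> = tensor_mat n (\<lambda>j. f j * g j) $$ (r, c)"
    using r c assms by (simp add: tensor_mat_index index_mult_mat_2)
  finally show "(tensor_mat n f * tensor_mat n g) $$ (r, c) = tensor_mat n (\<lambda>j. f j * g j) $$ (r, c)" .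
qed auto

lemma tensor_mat_mult3:
  assumes "\<And>j. j \<in> {1..n} \<Longrightarrow> f j \<in> carrier_mat 2 2" "\<And>j. j \<in> {1..n} \<Longrightarrow> g j \<in> carrier_mat 2 2"
    "\<And>j. j \<in> {1..n} \<Longrightarrow> h j \<in> carrier_mat 2 2"
  shows "tensor_mat n f * tensor_mat n g * tensor_mat n h = tensor_mat n (\<lambda>j. f j * g j * h j)"
proof -
  have "tensor_mat n f * tensor_mat n g = tensor_mat n (\<lambda>j. f j * g j)"
    by (rule tensor_mat_mult) (use assms in auto)
  also have "\<dots> * tensor_mat n h = tensor_mat n (\<lambda>j. f j * g j * h j)"
    by (rule tensor_mat_mult) (use assms in \<open>auto intro: mult_carrier_mat\<close>)
  finally show ?thesis .
qed

lemma tensor_mat_mat_diag: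
  "tensor_mat n (\<lambda>j. mat_diag 2 (d j)) = mat_diag (2^n) (\<lambda>r. \<Prod>j\<in>{1..n}. d j (qbit n j r))"
proof (rule eq_matI)
  fix r c assume "r < dim_row (mat_diag (2^n) (\<lambda>r. \<Prod>j\<in>{1..n}. d j (qbit n j r)))"
    "c < dim_col (mat_diag (2^n) (\<lambda>r. \<Prod>j\<in>{1..n}. d j (qbit n j r)))"
  hence r: "r < 2^n" and c: "c < 2^n" by (auto simp: mat_diag_def)
  show "tensor_mat n (\<lambda>j. mat_diag 2 (d j)) $$ (r, c) = mat_diag (2^n) (\<lambda>r. \<Prod>j\<in>{1..n}. d j (qbit n j r)) $$ (r, c)"
  proof (cases "r = c")
    case True with r show ?thesis by (simp add: tensor_mat_index mat_diag_def)
  next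
    case False
    then obtain j where "j \<in> {1..n}" "qbit n j r \<noteq> qbit n j c"
      using eq_if_qbits_eq[OF r c] by blast
    hence "tensor_mat n (\<lambda>j. mat_diag 2 (d j)) $$ (r, c) = 0"
      using r c by (auto simp: tensor_mat_index mat_diag_def intro!: prod_zero)
    with False r c show ?thesis by (simp add: mat_diag_def)
  qed
qed (auto simp: mat_diag_def)

lemma tensor_mat_one: "tensor_mat n (\<lambda>_. 1\<^sub>m 2) = 1\<^sub>m (2^n)"
  using tensor_mat_mat_diag[of n "\<lambda>_ _. 1"] by simp

lemma tensor_mat_add_at:
  assumes j: "j \<in> {1..n}" and "A \<in> carrier_mat 2 2" "B \<in> carrier_mat 2 2"
  shows "tensor_mat n (\<lambda>k. if k = j then A else F k) + tensor_mat n (\<lambda>k. if k = j then B else F k)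
       = tensor_mat n (\<lambda>k. if k = j then A + B else F k)"
proof (rule eq_matI)
  fix r c assume "r < dim_row (tensor_mat n (\<lambda>k. if k = j then A + B else F k))"
    "c < dim_col (tensor_mat n (\<lambda>k. if k = j then A + B else F k))"
  hence r: "r < 2^n" and c: "c < 2^n" by auto
  let ?rest = "\<Prod>k\<in>{1..n}-{j}. F k $$ (qbit n k r, qbit n k c)"
  have factor: "(\<Prod>k\<in>{1..n}. (if k = j then M else F k) $$ (qbit n k r, qbit n k c))
      = M $$ (qbit n j r, qbit n j c) * ?rest" for M
    using j by (simp add: prod.remove)
  have "(tensor_mat n (\<lambda>k. if k = j then A else F k) + tensor_mat n (\<lambda>k. if k = j then B else F k)) $$ (r, c)
      = A $$ (qbit n j r, qbit n j c) * ?rest + B $$ (qbit n j r, qbit n j c) * ?rest"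
    using r c by (simp only: index_add_mat tensor_mat_dim tensor_mat_index factor)
  also have "\<dots> = (A + B) $$ (qbit n j r, qbit n j c) * ?rest"
    using assms by (simp add: distrib_right)
  also have "\<dots> = tensor_mat n (\<lambda>k. if k = j then A + B else F k) $$ (r, c)"
    using r c by (simp only: tensor_mat_index factor)
  finally show "(tensor_mat n (\<lambda>k. if k = j then A else F k) + tensor_mat n (\<lambda>k. if k = j then B else F k)) $$ (r, c)
      = tensor_mat n (\<lambda>k. if k = j then A + B else F k) $$ (r, c)" .
qed auto

lemma adjoint_dim [simp]: "dim_row (adjoint A) = dim_col A" "dim_col (adjoint A) = dim_row A"
  by (simp_all add: adjoint_def)

lemma adjoint_carrier_mat [simp]: "A \<in> carrier_mat n m \<Longrightarrow> adjoint A \<in> carrier_mat m n"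
  unfolding carrier_mat_def adjoint_def by auto

lemma adjoint_index: "i < dim_col A \<Longrightarrow> j < dim_row A \<Longrightarrow> adjoint A $$ (i, j) = cnj (A $$ (j, i))"
  by (simp add: adjoint_def)

lemma adjoint_one [simp]: "adjoint (1\<^sub>m n) = 1\<^sub>m n"
  by (rule eq_matI) (auto simp: adjoint_def)

lemma adjoint_mult:
  assumes "A \<in> carrier_mat n k" "B \<in> carrier_mat k m"
  shows "adjoint (A * B) = adjoint B * adjoint A"
proof (rule eq_matI)
  fix i j assume "i < dim_row (adjoint B * adjoint A)" "j < dim_col (adjoint B * adjoint A)"
  hence i: "i < m" and j: "j < n" using assms by auto
  have "adjoint (A * B) $$ (i, j) = cnj (\<Sum>l\<in>{0..<k}. A $$ (j, l) * B $$ (l, i))"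
    using assms i j by (simp add: adjoint_index scalar_prod_def)
  also have "\<dots> = (\<Sum>l\<in>{0..<k}. adjoint B $$ (i, l) * adjoint A $$ (l, j))"
    using assms i j by (simp add: adjoint_index mult.commute)
  also have "\<dots> = (adjoint B * adjoint A) $$ (i, j)"
    using assms i j by (simp add: scalar_prod_def)
  finally show "adjoint (A * B) $$ (i, j) = (adjoint B * adjoint A) $$ (i, j)" .
qed (use assms in auto)

lemma tensor_mat_adjoint:
  assumes "\<And>j. j \<in> {1..n} \<Longrightarrow> f j \<in> carrier_mat 2 2"
  shows "adjoint (tensor_mat n f) = tensor_mat n (\<lambda>j. adjoint (f j))"
proof (rule eq_matI)
  fix r c assume "r < dim_row (tensor_mat n (\<lambda>j. adjoint (f j)))" "c < dim_col (tensor_mat n (\<lambda>j. adjoint (f j)))"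
  hence r: "r < 2^n" and c: "c < 2^n" by auto
  have "adjoint (tensor_mat n f) $$ (r, c) = (\<Prod>j\<in>{1..n}. cnj (f j $$ (qbit n j c, qbit n j r)))"
    using r c by (simp add: adjoint_index tensor_mat_index)
  also have "\<dots> = (\<Prod>j\<in>{1..n}. adjoint (f j) $$ (qbit n j r, qbit n j c))"
  proof (intro prod.cong refl)
    fix j assume "j \<in> {1..n}"
    with assms have "f j \<in> carrier_mat 2 2" by blast
    thus "cnj (f j $$ (qbit n j c, qbit n j r)) = adjoint (f j) $$ (qbit n j r, qbit n j c)"
      by (simp add: adjoint_index)
  qed
  finally show "adjoint (tensor_mat n f) $$ (r, c) = tensor_mat n (\<lambda>j. adjoint (f j)) $$ (r, c)"
    using r c by (simp add: tensor_mat_index)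
qed auto

lemma conj_mult:
  assumes "A \<in> carrier_mat n n" "B \<in> carrier_mat n n" "C \<in> carrier_mat n n"
  shows "(A * B) * C * adjoint (A * B) = A * (B * C * adjoint B) * adjoint A"
  using assms by (simp add: adjoint_mult[OF assms(1,2)] assoc_mult_mat[of _ n n _ n _ n]
      mult_carrier_mat[of _ n n _ n])

lemma adjoint_pow_mult_pow:
  assumes U: "U \<in> carrier_mat n n" and "adjoint U * U = 1\<^sub>m n"
  shows "adjoint (U ^\<^sub>m j) * U ^\<^sub>m j = 1\<^sub>m n"
proof (induction j)
  case 0 show ?case using U by simp
next
  case (Suc j)
  have Uj: "U ^\<^sub>m j \<in> carrier_mat n n" using U by simp
  have "adjoint (U ^\<^sub>m Suc j) * U ^\<^sub>m Suc j = adjoint U * (adjoint (U ^\<^sub>m j) * U ^\<^sub>m j) * U"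
    using U Uj by (simp add: adjoint_mult[OF Uj U] assoc_mult_mat[of _ n n _ n _ n]
        mult_carrier_mat[of _ n n _ n])
  also have "\<dots> = 1\<^sub>m n" using U assms(2) by (simp add: Suc)
  finally show ?case .
qed

lemma conj_pow_mat:
  assumes U: "U \<in> carrier_mat n n" and f: "\<And>x. f x \<in> carrier_mat n n"
    and g: "\<And>x. U * f x * adjoint U = f (g x)"
  shows "U ^\<^sub>m j * f x * adjoint (U ^\<^sub>m j) = f ((g ^^ j) x)"
proof (induction j arbitrary: x)
  case 0 show ?case using U f[of x] by simp
next
  case (Suc j)
  have "U ^\<^sub>m Suc j * f x * adjoint (U ^\<^sub>m Suc j) = U ^\<^sub>m j * (U * f x * adjoint U) * adjoint (U ^\<^sub>m j)"
    using conj_mult[of "U ^\<^sub>m j" n U "f x"] U f by simp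
  also have "\<dots> = f ((g ^^ Suc j) x)" by (simp add: g Suc funpow_swap1)
  finally show ?case .
qed

section \<open>Lie algebras generated by matrices\<close>

lemma lie_closure_carrier:
  assumes "G \<subseteq> carrier_mat N N" "x \<in> lie_closure N G"
  shows "x \<in> carrier_mat N N"
  using assms(2)
  by (induction rule: lie_closure.induct) (use assms(1) in \<open>auto simp: commutator_def\<close>)

lemma lie_closure_hom_image:
  assumes G: "G \<subseteq> carrier_mat N N"
    and f_zero: "f (0\<^sub>m N N) = 0\<^sub>m M M"
    and f_add: "\<And>a b. a \<in> carrier_mat N N \<Longrightarrow> b \<in> carrier_mat N N \<Longrightarrow> f (a + b) = f a + f b"
    and f_smult: "\<And>a r. a \<in> carrier_mat N N \<Longrightarrow> f (complex_of_real r \<cdot>\<^sub>m a) = complex_of_real r \<cdot>\<^sub>m f a"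
    and f_bracket: "\<And>a b. a \<in> carrier_mat N N \<Longrightarrow> b \<in> carrier_mat N N \<Longrightarrow>
        f (commutator a b) = commutator (f a) (f b)"
  shows "f ` lie_closure N G = lie_closure M (f ` G)"
proof
  note carrier = lie_closure_carrier[OF G]
  show "f ` lie_closure N G \<subseteq> lie_closure M (f ` G)"
  proof
    fix y assume "y \<in> f ` lie_closure N G"
    then obtain x where x: "x \<in> lie_closure N G" and y: "y = f x" by blast
    from x show "y \<in> lie_closure M (f ` G)" unfolding y
      by (induction rule: lie_closure.induct)
        (use carrier in \<open>auto simp: f_zero f_add f_smult f_bracket intro: lie_closure.intros\<close>)
  qed
  show "lie_closure M (f ` G) \<subseteq> f ` lie_closure N G"
  proof
    fix y assume "y \<in> lie_closure M (f ` G)"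
    then show "y \<in> f ` lie_closure N G"
    proof (induction rule: lie_closure.induct)
      case zero show ?case by (metis f_zero image_eqI lie_closure.zero)
    next
      case (add a b)
      then obtain x1 x2 where "x1 \<in> lie_closure N G" "x2 \<in> lie_closure N G" "a = f x1" "b = f x2" by blast
      thus ?case using carrier by (metis f_add image_eqI lie_closure.add)
    next
      case (smult a r)
      then obtain x where "x \<in> lie_closure N G" "a = f x" by blast
      thus ?case using carrier by (metis f_smult image_eqI lie_closure.smult)
    next
      case (bracket a b)
      then obtain x1 x2 where "x1 \<in> lie_closure N G" "x2 \<in> lie_closure N G" "a = f x1" "b = f x2" by blast
      thus ?case using carrier by (metis f_bracket image_eqI lie_closure.bracket)
    qed (auto intro: lie_closure.gen)
  qed
qed

text \<open>For square matrices, \<open>U\<^sup>\<dagger>U = 1\<close> already makes \<open>U\<close> unitary.\<close>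
locale unitary_conjugation =
  fixes N :: nat and U :: "complex mat"
  assumes carrier: "U \<in> carrier_mat N N" and adjoint_mult_self: "adjoint U * U = 1\<^sub>m N"
begin

definition Ad :: "complex mat \<Rightarrow> complex mat" where
  "Ad a = U * a * adjoint U"

lemma adjoint_carrier: "adjoint U \<in> carrier_mat N N"
  using carrier by simp

lemma Ad_zero: "Ad (0\<^sub>m N N) = 0\<^sub>m N N"
  unfolding Ad_def using carrier adjoint_carrier by simp

lemma Ad_add:
  assumes "a \<in> carrier_mat N N" "b \<in> carrier_mat N N"
  shows "Ad (a + b) = Ad a + Ad b"
proof -
  have "U * a \<in> carrier_mat N N" "U * b \<in> carrier_mat N N" using carrier assms by auto
  thus ?thesis
    unfolding Ad_def mult_add_distrib_mat[OF carrier assms] by (rule add_mult_distrib_mat[OF _ _ adjoint_carrier])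
qed

lemma Ad_minus:
  assumes "a \<in> carrier_mat N N" "b \<in> carrier_mat N N"
  shows "Ad (a - b) = Ad a - Ad b"
proof -
  have "U * a \<in> carrier_mat N N" "U * b \<in> carrier_mat N N" using carrier assms by auto
  thus ?thesis
    unfolding Ad_def mult_minus_distrib_mat[OF carrier assms] by (rule minus_mult_distrib_mat[OF _ _ adjoint_carrier])
qed

lemma Ad_smult:
  assumes "a \<in> carrier_mat N N"
  shows "Ad (k \<cdot>\<^sub>m a) = k \<cdot>\<^sub>m Ad a"
proof -
  have "U * a \<in> carrier_mat N N" using carrier assms by auto
  thus ?thesis
    unfolding Ad_def mult_smult_distrib[OF carrier assms] by (rule mult_smult_assoc_mat[OF _ adjoint_carrier])
qed

lemma Ad_mult:
  assumes a: "a \<in> carrier_mat N N" and b: "b \<in> carrier_mat N N"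
  shows "Ad (a * b) = Ad a * Ad b"
proof -
  have "Ad a * Ad b = U * (a * ((adjoint U * U) * (b * adjoint U)))"
    unfolding Ad_def using carrier adjoint_carrier a b
    by (simp add: assoc_mult_mat[of _ N N _ N _ N] mult_carrier_mat[of _ N N _ N])
  also have "\<dots> = Ad (a * b)"
    unfolding Ad_def adjoint_mult_self using carrier adjoint_carrier a b
    by (simp add: assoc_mult_mat[of _ N N _ N _ N] mult_carrier_mat[of _ N N _ N])
  finally show ?thesis ..
qed

lemma Ad_commutator:
  "a \<in> carrier_mat N N \<Longrightarrow> b \<in> carrier_mat N N \<Longrightarrow> Ad (commutator a b) = commutator (Ad a) (Ad b)"
  unfolding commutator_def by (simp add: Ad_minus Ad_mult)

lemma Ad_inverse: "a \<in> carrier_mat N N \<Longrightarrow> adjoint U * Ad a * U = a"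
  unfolding Ad_def using carrier adjoint_carrier
  by (simp add: assoc_mult_mat[of _ N N _ N _ N] mult_carrier_mat[of _ N N _ N] adjoint_mult_self
      flip: assoc_mult_mat[of "adjoint U" N N U N])

lemma inj_on_Ad: "inj_on Ad (carrier_mat N N)"
  by (rule inj_onI) (metis Ad_inverse)

lemma bij_betw_Ad_lie_closure:
  assumes "G \<subseteq> carrier_mat N N"
  shows "bij_betw Ad (lie_closure N G) (lie_closure N (Ad ` G))"
proof (rule bij_betw_imageI)
  show "inj_on Ad (lie_closure N G)"
    using inj_on_subset[OF inj_on_Ad] lie_closure_carrier[OF assms] by blast
  show "Ad ` lie_closure N G = lie_closure N (Ad ` G)"
    by (rule lie_closure_hom_image[OF assms]) (simp_all add: Ad_zero Ad_add Ad_smult Ad_commutator)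
qed

end

section \<open>Diagonalisation and the matrix exponential\<close>

lemma pow_mat_diag: "mat_diag n f ^\<^sub>m k = mat_diag n (\<lambda>i. f i ^ k)"
proof (induction k)
  case 0
  have "dim_row (mat_diag n f) = n" by (simp add: mat_diag_def)
  thus ?case by simp
next
  case (Suc k) then show ?case by (simp add: power_Suc2 del: power_Suc)
qed

lemma smult_mat_diag: "(a :: 'a :: semiring_0) \<cdot>\<^sub>m mat_diag n d = mat_diag n (\<lambda>i. a * d i)"
  by (rule eq_matI) (auto simp: mat_diag_def)

lemma smult_conj_mat_diag:
  fixes a :: "'a :: comm_ring_1"
  assumes P: "P \<in> carrier_mat m n" and Q: "Q \<in> carrier_mat n k"
  shows "a \<cdot>\<^sub>m (P * mat_diag n d * Q) = P * mat_diag n (\<lambda>i. a * d i) * Q"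
proof -
  have "P * mat_diag n (\<lambda>i. a * d i) = a \<cdot>\<^sub>m (P * mat_diag n d)"
    unfolding smult_mat_diag[symmetric] by (rule mult_smult_distrib[OF P mat_diag_dim])
  thus ?thesis
    by (simp add: mult_smult_assoc_mat[OF mult_carrier_mat[OF P mat_diag_dim] Q])
qed

lemma index_mult_mat_diag_mult:
  assumes "P \<in> carrier_mat m n" "Q \<in> carrier_mat n k" "r < m" "c < k"
  shows "(P * mat_diag n d * Q) $$ (r, c) = (\<Sum>a<n. P $$ (r, a) * d a * Q $$ (a, c))"
proof -
  have "P * mat_diag n d = mat m n (\<lambda>(i, j). P $$ (i, j) * d j)"
    using assms(1) by (rule mat_diag_mult_right)
  thus ?thesis using assms by (simp add: scalar_prod_def atLeast0LessThan)
qed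

lemma mat_exp_dim [simp]: "dim_row (mat_exp A) = dim_row A" "dim_col (mat_exp A) = dim_col A"
  unfolding mat_exp_def by (rule dim_row_mat, rule dim_col_mat)

lemma mat_exp_similar_mat_diag:
  assumes wit: "similar_mat_wit A (mat_diag N d) P Q"
  shows "mat_exp A = P * mat_diag N (\<lambda>i. exp (d i)) * Q"
proof -
  have "dim_row (mat_diag N d) = dim_row A"
    by (rule carrier_matD(1)[OF similar_mat_witD(5)[OF refl wit]])
  hence "N = dim_row A" unfolding mat_diag_def by (simp only: dim_row_mat)
  note carrier = similar_mat_witD(4,6,7)[OF this wit]
  have exp_series: "(\<lambda>k. x ^ k / of_nat (fact k)) sums exp x" for x :: complex
    using exp_converges[of x] by (simp add: scaleR_conv_of_real divide_inverse mult.commute)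
  show ?thesis
  proof (rule eq_matI)
    fix i j assume "i < dim_row (P * mat_diag N (\<lambda>i. exp (d i)) * Q)"
      "j < dim_col (P * mat_diag N (\<lambda>i. exp (d i)) * Q)"
    hence i: "i < N" and j: "j < N" using carrier by auto
    have "(A ^\<^sub>m k) $$ (i, j) = (\<Sum>a<N. P $$ (i, a) * d a ^ k * Q $$ (a, j))" for k
      unfolding similar_mat_wit_pow_id[OF wit, of k] pow_mat_diag
      by (rule index_mult_mat_diag_mult[OF carrier(2,3) i j])
    hence "(\<lambda>k. (A ^\<^sub>m k) $$ (i, j) / of_nat (fact k))
        = (\<lambda>k. \<Sum>a<N. P $$ (i, a) * Q $$ (a, j) * (d a ^ k / of_nat (fact k)))"
      by (simp add: sum_divide_distrib ac_simps)
    moreover have "\<dots> sums (\<Sum>a<N. P $$ (i, a) * Q $$ (a, j) * exp (d a))"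
      by (intro sums_sum sums_mult exp_series)
    ultimately have "mat_exp A $$ (i, j) = (\<Sum>a<N. P $$ (i, a) * exp (d a) * Q $$ (a, j))"
      using i j carrier by (simp add: mat_exp_def sums_iff ac_simps)
    also have "\<dots> = (P * mat_diag N (\<lambda>i. exp (d i)) * Q) $$ (i, j)"
      by (rule index_mult_mat_diag_mult[symmetric, OF carrier(2,3) i j])
    finally show "mat_exp A $$ (i, j) = (P * mat_diag N (\<lambda>i. exp (d i)) * Q) $$ (i, j)" .
  qed (use carrier in auto)
qed

lemma mat_sum_cong:
  "(\<And>j. j \<in> {1..n} \<Longrightarrow> f j = g j) \<Longrightarrow> mat_sum N n f = mat_sum N n g"
  unfolding mat_sum_def by (rule foldr_cong) auto

lemma mat_sum_carrier:
  assumes "\<And>j. f j \<in> carrier_mat N N"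
  shows "mat_sum N n f \<in> carrier_mat N N"
proof -
  have "foldr (\<lambda>j acc. f j + acc) xs (0\<^sub>m N N) \<in> carrier_mat N N" for xs
  proof (induction xs)
    case Nil show ?case by simp
  next
    case (Cons a xs) then show ?case using assms[of a] by simp
  qed
  thus ?thesis unfolding mat_sum_def .
qed

lemma mat_sum_index:
  assumes "\<And>j. f j \<in> carrier_mat N N" "r < N" "c < N"
  shows "mat_sum N n f $$ (r, c) = (\<Sum>j\<in>{1..n}. f j $$ (r, c))"
proof -
  have "foldr (\<lambda>j acc. f j + acc) xs (0\<^sub>m N N) \<in> carrier_mat N N \<and>
      foldr (\<lambda>j acc. f j + acc) xs (0\<^sub>m N N) $$ (r, c) = (\<Sum>j\<leftarrow>xs. f j $$ (r, c))" for xs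
  proof (induction xs)
    case Nil show ?case using assms by simp
  next
    case (Cons a xs)
    hence IH: "foldr (\<lambda>j acc. f j + acc) xs (0\<^sub>m N N) \<in> carrier_mat N N"
      "foldr (\<lambda>j acc. f j + acc) xs (0\<^sub>m N N) $$ (r, c) = (\<Sum>j\<leftarrow>xs. f j $$ (r, c))"
      by blast+
    show ?case
      using IH assms(2,3) carrier_matD[OF IH(1)] carrier_matD[OF assms(1)[of a]] by simp
  qed
  hence "mat_sum N n f $$ (r, c) = (\<Sum>j\<leftarrow>[1..<Suc n]. f j $$ (r, c))"
    unfolding mat_sum_def by blast
  also have "\<dots> = (\<Sum>j\<in>{1..<Suc n}. f j $$ (r, c))"
    by (simp add: sum_set_upt_conv_sum_list_nat[symmetric])
  also have "{1..<Suc n} = {1..n}"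
    by auto
  finally show ?thesis .
qed

lemma mat_sum_conj_mat_diag:
  assumes P: "P \<in> carrier_mat N N" and Q: "Q \<in> carrier_mat N N"
  shows "mat_sum N n (\<lambda>j. c j \<cdot>\<^sub>m (P * mat_diag N (d j) * Q))
       = P * mat_diag N (\<lambda>r. \<Sum>j\<in>{1..n}. c j * d j r) * Q"
proof -
  have carrier: "c j \<cdot>\<^sub>m (P * mat_diag N (d j) * Q) \<in> carrier_mat N N" for j
    using P Q by auto
  show ?thesis
  proof (rule eq_matI)
    fix r s assume "r < dim_row (P * mat_diag N (\<lambda>r. \<Sum>j\<in>{1..n}. c j * d j r) * Q)"
      "s < dim_col (P * mat_diag N (\<lambda>r. \<Sum>j\<in>{1..n}. c j * d j r) * Q)"
    hence r: "r < N" and s: "s < N" using P Q by auto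
    have "mat_sum N n (\<lambda>j. c j \<cdot>\<^sub>m (P * mat_diag N (d j) * Q)) $$ (r, s)
        = (\<Sum>j\<in>{1..n}. c j * (\<Sum>a<N. P $$ (r, a) * d j a * Q $$ (a, s)))"
      using r s by (simp add: mat_sum_index[OF carrier] carrier_matD[OF P] carrier_matD[OF Q]
          index_mult_mat_diag_mult[OF P Q] del: index_mult_mat(1))
    also have "\<dots> = (\<Sum>j\<in>{1..n}. \<Sum>a<N. P $$ (r, a) * (c j * d j a) * Q $$ (a, s))"
      by (simp add: sum_distrib_left algebra_simps)
    also have "\<dots> = (\<Sum>a<N. \<Sum>j\<in>{1..n}. P $$ (r, a) * (c j * d j a) * Q $$ (a, s))"
      by (rule sum.swap)
    also have "\<dots> = (\<Sum>a<N. P $$ (r, a) * (\<Sum>j\<in>{1..n}. c j * d j a) * Q $$ (a, s))"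
      by (simp add: sum_distrib_left sum_distrib_right)
    also have "\<dots> = (P * mat_diag N (\<lambda>r. \<Sum>j\<in>{1..n}. c j * d j r) * Q) $$ (r, s)"
      by (rule index_mult_mat_diag_mult[symmetric, OF P Q r s])
    finally show "mat_sum N n (\<lambda>j. c j \<cdot>\<^sub>m (P * mat_diag N (d j) * Q)) $$ (r, s)
        = (P * mat_diag N (\<lambda>r. \<Sum>j\<in>{1..n}. c j * d j r) * Q) $$ (r, s)" .
  qed (use P Q carrier_matD[OF mat_sum_carrier[where f = "\<lambda>j. c j \<cdot>\<^sub>m (P * mat_diag N (d j) * Q)", OF carrier]]
      in auto)
qed

definition mat2 :: "complex \<Rightarrow> complex \<Rightarrow> complex \<Rightarrow> complex \<Rightarrow> complex mat" where
  "mat2 a b c d = mat 2 2 (\<lambda>(i, j). if i = 0 then (if j = 0 then a else b) else (if j = 0 then c else d))"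

lemma mat2_carrier [simp]: "mat2 a b c d \<in> carrier_mat 2 2"
  by (simp add: mat2_def)

lemma mat2_index [simp]:
  "mat2 a b c d $$ (0, 0) = a" "mat2 a b c d $$ (0, 1) = b" "mat2 a b c d $$ (1, 0) = c" "mat2 a b c d $$ (1, 1) = d"
  by (simp_all add: mat2_def)

lemma less_2_iff: "(i::nat) < 2 \<longleftrightarrow> i = 0 \<or> i = 1"
  by auto

lemma mat2_mult [simp]:
  "mat2 a b c d * mat2 e f g h = mat2 (a * e + b * g) (a * f + b * h) (c * e + d * g) (c * f + d * h)"
  by (rule eq_matI) (auto simp: less_2_iff mat2_def scalar_prod_def numeral_2_eq_2)

lemma mat2_adjoint [simp]: "adjoint (mat2 a b c d) = mat2 (cnj a) (cnj c) (cnj b) (cnj d)"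
  by (rule eq_matI) (auto simp: less_2_iff adjoint_def mat2_def)

lemma mat2_eq_iff [simp]: "mat2 a b c d = mat2 a' b' c' d' \<longleftrightarrow> a = a' \<and> b = b' \<and> c = c' \<and> d = d'"
  by (metis mat2_index)

lemma one_mat_2: "1\<^sub>m 2 = mat2 1 0 0 1"
  by (rule eq_matI) (auto simp: less_2_iff mat2_def)

lemma mat_diag_2: "mat_diag 2 d = mat2 (d 0) 0 0 (d 1)"
  by (rule eq_matI) (auto simp: less_2_iff mat2_def mat_diag_def)

definition pauli_mat :: "pauli \<Rightarrow> complex mat" where
  "pauli_mat P = mat 2 2 (\<lambda>(a, b). pauli_entry P a b)"

lemma pauli_mat_mat2:
  "pauli_mat PI = mat2 1 0 0 1" "pauli_mat PX = mat2 0 1 1 0"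
  "pauli_mat PY = mat2 0 (-\<i>) \<i> 0" "pauli_mat PZ = mat2 1 0 0 (-1)"
  by (rule eq_matI; auto simp: less_2_iff mat2_def pauli_mat_def)+

lemma pauli_mat_carrier [simp]: "pauli_mat P \<in> carrier_mat 2 2"
  by (simp add: pauli_mat_def)

lemma pauli_string_eq_tensor_mat: "pauli_string n p = tensor_mat n (\<lambda>k. pauli_mat (p k))"
  unfolding pauli_string_def tensor_mat_def pauli_mat_def by (rule cong[of "mat _ _"], simp, auto)

lemma single_eq_tensor_mat: "single n P j = tensor_mat n (\<lambda>k. if k = j then pauli_mat P else 1\<^sub>m 2)"
  unfolding single_def pauli_string_eq_tensor_mat
  by (rule arg_cong[where f = "tensor_mat n"]) (auto simp: pauli_mat_mat2 one_mat_2)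

fun pauli_cycle :: "pauli \<Rightarrow> pauli" where
  "pauli_cycle PI = PI" | "pauli_cycle PX = PZ" | "pauli_cycle PZ = PY" | "pauli_cycle PY = PX"

lemma funpow_pauli_cycle_PI [simp]: "(pauli_cycle ^^ j) PI = PI"
  by (induction j) auto

lemma funpow_pauli_cycle_image: "(pauli_cycle ^^ j) ` {PX, PY, PZ} = {PX, PY, PZ}"
proof (induction j)
  case 0 show ?case by simp
next
  case (Suc j)
  have "(pauli_cycle ^^ Suc j) ` {PX, PY, PZ} = pauli_cycle ` (pauli_cycle ^^ j) ` {PX, PY, PZ}"
    by (simp add: image_comp)
  also have "\<dots> = {PX, PY, PZ}" unfolding Suc by auto
  finally show ?case .
qed

definition cycle_gate :: "complex mat" where
  "cycle_gate = mat2 ((1 + \<i>) / 2) ((1 + \<i>) / 2) ((-1 + \<i>) / 2) ((1 - \<i>) / 2)"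

lemma cycle_gate_carrier [simp]: "cycle_gate \<in> carrier_mat 2 2"
  by (simp add: cycle_gate_def)

lemma cycle_gate_conj_pauli: "cycle_gate * pauli_mat P * adjoint cycle_gate = pauli_mat (pauli_cycle P)"
  by (cases P) (auto simp: cycle_gate_def pauli_mat_mat2 field_simps complex_eq_iff)

lemma adjoint_cycle_gate_mult: "adjoint cycle_gate * cycle_gate = 1\<^sub>m 2"
  by (auto simp: cycle_gate_def one_mat_2 field_simps complex_eq_iff)

lemma cycle_gate_pow_conj_pauli:
  "cycle_gate ^\<^sub>m j * pauli_mat P * adjoint (cycle_gate ^\<^sub>m j) = pauli_mat ((pauli_cycle ^^ j) P)"
  by (rule conj_pow_mat[where n = 2]) (auto simp: cycle_gate_conj_pauli)

section \<open>Eigendecomposition of \<open>X + Y + Z\<close>\<close>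

definition sqrt3 :: complex where
  "sqrt3 = complex_of_real (sqrt 3)"

lemma sqrt3_square: "sqrt3 * sqrt3 = 3"
  by (simp add: sqrt3_def flip: of_real_mult)

definition eigenvalue :: "nat \<Rightarrow> complex" where
  "eigenvalue b = (if b = 0 then sqrt3 else - sqrt3)"

text \<open>The columns are eigenvectors of \<open>X + Y + Z\<close> for \<open>\<surd>3\<close> and \<open>-\<surd>3\<close>.\<close>
definition eigenbasis :: "complex mat" where
  "eigenbasis = mat2 (1 - \<i>) (\<i> - 1) (sqrt3 - 1) (sqrt3 + 1)"

definition eigenbasis_det :: complex where
  "eigenbasis_det = 2 * sqrt3 * (1 - \<i>)"

lemma eigenbasis_det_nonzero: "eigenbasis_det \<noteq> 0"
  by (simp add: eigenbasis_det_def sqrt3_def complex_eq_iff)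

definition eigenbasis_inv :: "complex mat" where
  "eigenbasis_inv = mat2 ((sqrt3 + 1) / eigenbasis_det) ((1 - \<i>) / eigenbasis_det)
     ((1 - sqrt3) / eigenbasis_det) ((1 - \<i>) / eigenbasis_det)"

lemma eigenbasis_carrier [simp]: "eigenbasis \<in> carrier_mat 2 2"
  and eigenbasis_inv_carrier [simp]: "eigenbasis_inv \<in> carrier_mat 2 2"
  by (simp_all add: eigenbasis_def eigenbasis_inv_def)

lemma eigenbasis_inv_mult: "eigenbasis_inv * eigenbasis = 1\<^sub>m 2"
proof -
  have "eigenbasis_inv * eigenbasis = mat2 1 0 0 1"
    using eigenbasis_det_nonzero sqrt3_square unfolding eigenbasis_def eigenbasis_inv_def mat2_mult mat2_eq_iff
    by (simp add: field_simps eigenbasis_det_def; algebra)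
  thus ?thesis by (simp add: one_mat_2)
qed

lemma eigenbasis_mult_inv: "eigenbasis * eigenbasis_inv = 1\<^sub>m 2"
proof -
  have "eigenbasis * eigenbasis_inv = mat2 1 0 0 1"
    using eigenbasis_det_nonzero sqrt3_square unfolding eigenbasis_def eigenbasis_inv_def mat2_mult mat2_eq_iff
    by (simp add: field_simps eigenbasis_det_def; algebra)
  thus ?thesis by (simp add: one_mat_2)
qed

lemma similar_mat_wit_eigenbasis:
  "A = eigenbasis * mat_diag 2 d * eigenbasis_inv \<Longrightarrow>
   similar_mat_wit A (mat_diag 2 d) eigenbasis eigenbasis_inv"
  by (rule similar_mat_witI[OF eigenbasis_mult_inv eigenbasis_inv_mult])
    (simp_all add: mult_carrier_mat[OF mult_carrier_mat[OF eigenbasis_carrier mat_diag_dim] eigenbasis_inv_carrier])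

lemma pauli_sum_eigendecomposition:
  "pauli_mat PX + pauli_mat PY + pauli_mat PZ = eigenbasis * mat_diag 2 eigenvalue * eigenbasis_inv"
proof -
  have "pauli_mat PX + pauli_mat PY + pauli_mat PZ = mat2 1 (1 - \<i>) (1 + \<i>) (-1)"
    by (rule eq_matI) (auto simp: pauli_mat_mat2 mat2_def less_2_iff)
  thus ?thesis
    using eigenbasis_det_nonzero sqrt3_square
    unfolding eigenbasis_def eigenbasis_inv_def eigenvalue_def mat_diag_2 mat2_mult mat2_eq_iff
    by (simp add: field_simps eigenbasis_det_def; algebra)
qed

definition theta :: complex where
  "theta = \<i> * complex_of_real (pi / (3 * sqrt 3))"

text \<open>That is, cycle_gate = exp (\<theta> (X + Y + Z)), as exp (\<plusminus>\<theta>\<surd>3) = e^(\<plusminus>i\<pi>/3) = (1 \<plusminus> i\<surd>3)/2.\<close>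
lemma cycle_gate_eigendecomposition:
  "cycle_gate = eigenbasis * mat_diag 2 (\<lambda>b. exp (theta * eigenvalue b)) * eigenbasis_inv"
proof -
  have "complex_of_real (pi / (3 * sqrt 3)) * complex_of_real (sqrt 3) = complex_of_real (pi / 3)"
    by (simp only: of_real_mult[symmetric]) (simp add: field_simps)
  hence theta_sqrt3: "theta * sqrt3 = \<i> * complex_of_real (pi / 3)"
    by (simp add: theta_def sqrt3_def mult.assoc)
  have "exp (theta * sqrt3) = cis (pi / 3)" and "exp (theta * - sqrt3) = cis (- (pi / 3))"
    by (simp_all add: theta_sqrt3 cis_conv_exp)
  hence "mat_diag 2 (\<lambda>b. exp (theta * eigenvalue b)) = mat2 ((1 + \<i> * sqrt3) / 2) 0 0 ((1 - \<i> * sqrt3) / 2)"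
    by (simp add: mat_diag_2 eigenvalue_def sqrt3_def complex_eq_iff cos_60 sin_60)
  thus ?thesis
    using eigenbasis_det_nonzero sqrt3_square
    unfolding cycle_gate_def eigenbasis_def eigenbasis_inv_def mat2_mult mat2_eq_iff
    by (simp add: field_simps eigenbasis_det_def; algebra)
qed

lemma cycle_gate_pow_eigendecomposition:
  "cycle_gate ^\<^sub>m j = eigenbasis * mat_diag 2 (\<lambda>b. exp (theta * eigenvalue b) ^ j) * eigenbasis_inv"
  using similar_mat_wit_pow_id[OF similar_mat_wit_eigenbasis[OF cycle_gate_eigendecomposition]]
  by (simp add: pow_mat_diag)

lemma similar_mat_wit_tensor_eigenbasis:
  "similar_mat_wit (tensor_mat n (\<lambda>_. eigenbasis) * mat_diag (2^n) d * tensor_mat n (\<lambda>_. eigenbasis_inv))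
     (mat_diag (2^n) d) (tensor_mat n (\<lambda>_. eigenbasis)) (tensor_mat n (\<lambda>_. eigenbasis_inv))"
proof (rule similar_mat_witI)
  show "tensor_mat n (\<lambda>_. eigenbasis) * tensor_mat n (\<lambda>_. eigenbasis_inv) = 1\<^sub>m (2^n)"
    using tensor_mat_mult[of n "\<lambda>_. eigenbasis" "\<lambda>_. eigenbasis_inv"]
    by (simp add: eigenbasis_mult_inv tensor_mat_one)
  show "tensor_mat n (\<lambda>_. eigenbasis_inv) * tensor_mat n (\<lambda>_. eigenbasis) = 1\<^sub>m (2^n)"
    using tensor_mat_mult[of n "\<lambda>_. eigenbasis_inv" "\<lambda>_. eigenbasis"]
    by (simp add: eigenbasis_inv_mult tensor_mat_one)
qed (auto intro: mult_carrier_mat[of _ "2^n" "2^n"])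

lemma single_pauli_sum_eigendecomposition:
  assumes j: "j \<in> {1..n}"
  shows "single n PX j + single n PY j + single n PZ j
    = tensor_mat n (\<lambda>_. eigenbasis) * mat_diag (2^n) (\<lambda>r. eigenvalue (qbit n j r))
      * tensor_mat n (\<lambda>_. eigenbasis_inv)"
proof -
  let ?D = "\<lambda>k. mat_diag 2 (\<lambda>b. if k = j then eigenvalue b else 1)"
  have "single n PX j + single n PY j + single n PZ j
      = tensor_mat n (\<lambda>k. if k = j then pauli_mat PX + pauli_mat PY + pauli_mat PZ else 1\<^sub>m 2)"
    unfolding single_eq_tensor_mat by (simp add: tensor_mat_add_at[OF j])
  also have "\<dots> = tensor_mat n (\<lambda>k. eigenbasis * ?D k * eigenbasis_inv)"
    by (rule tensor_mat_cong)
      (auto simp: pauli_sum_eigendecomposition eigenbasis_mult_inv right_mult_one_mat[OF eigenbasis_carrier])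
  also have "\<dots> = tensor_mat n (\<lambda>_. eigenbasis) * tensor_mat n ?D * tensor_mat n (\<lambda>_. eigenbasis_inv)"
    by (rule tensor_mat_mult3[symmetric]) auto
  also have "tensor_mat n ?D = mat_diag (2^n) (\<lambda>r. eigenvalue (qbit n j r))"
    using j by (simp add: tensor_mat_mat_diag prod.delta)
  finally show ?thesis .
qed

lemma U_gate_eq_tensor_mat: "U_gate n = tensor_mat n (\<lambda>j. cycle_gate ^\<^sub>m j)"
proof -
  let ?W = "tensor_mat n (\<lambda>_. eigenbasis)" and ?V = "tensor_mat n (\<lambda>_. eigenbasis_inv)"
  let ?e = "\<lambda>r. \<Sum>j\<in>{1..n}. of_nat j * eigenvalue (qbit n j r)"
  have "mat_sum (2^n) n (\<lambda>j. of_nat j \<cdot>\<^sub>m (single n PX j + single n PY j + single n PZ j))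
      = mat_sum (2^n) n (\<lambda>j. of_nat j \<cdot>\<^sub>m (?W * mat_diag (2^n) (\<lambda>r. eigenvalue (qbit n j r)) * ?V))"
    by (rule mat_sum_cong) (simp add: single_pauli_sum_eigendecomposition)
  also have "\<dots> = ?W * mat_diag (2^n) ?e * ?V"
    by (rule mat_sum_conj_mat_diag) simp_all
  finally have "U_gate n = mat_exp (?W * mat_diag (2^n) (\<lambda>r. theta * ?e r) * ?V)"
    unfolding U_gate_def theta_def[symmetric] by (simp add: smult_conj_mat_diag[OF tensor_mat_carrier tensor_mat_carrier])
  also have "\<dots> = ?W * mat_diag (2^n) (\<lambda>r. exp (theta * ?e r)) * ?V"
    by (rule mat_exp_similar_mat_diag[OF similar_mat_wit_tensor_eigenbasis])
  also have "(\<lambda>r. exp (theta * ?e r)) = (\<lambda>r. \<Prod>j\<in>{1..n}. exp (theta * eigenvalue (qbit n j r)) ^ j)"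
  proof
    fix r
    have "exp (theta * ?e r) = (\<Prod>j\<in>{1..n}. exp (of_nat j * (theta * eigenvalue (qbit n j r))))"
      by (simp add: sum_distrib_left exp_sum algebra_simps)
    thus "exp (theta * ?e r) = (\<Prod>j\<in>{1..n}. exp (theta * eigenvalue (qbit n j r)) ^ j)"
      by (simp only: exp_of_nat_mult)
  qed
  also have "mat_diag (2^n) \<dots> = tensor_mat n (\<lambda>j. mat_diag 2 (\<lambda>b. exp (theta * eigenvalue b) ^ j))"
    by (rule tensor_mat_mat_diag[symmetric])
  also have "?W * \<dots> * ?V = tensor_mat n (\<lambda>j. eigenbasis * mat_diag 2 (\<lambda>b. exp (theta * eigenvalue b) ^ j) * eigenbasis_inv)"
    by (rule tensor_mat_mult3) auto
  finally show ?thesis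
    by (simp only: cycle_gate_pow_eigendecomposition)
qed

lemma adjoint_U_gate: "adjoint (U_gate n) = tensor_mat n (\<lambda>j. adjoint (cycle_gate ^\<^sub>m j))"
  unfolding U_gate_eq_tensor_mat by (rule tensor_mat_adjoint) simp

lemma U_gate_unitary_conjugation: "unitary_conjugation (2^n) (U_gate n)"
proof
  show "U_gate n \<in> carrier_mat (2^n) (2^n)"
    by (simp add: U_gate_eq_tensor_mat)
  have "adjoint (U_gate n) * U_gate n = tensor_mat n (\<lambda>j. adjoint (cycle_gate ^\<^sub>m j) * cycle_gate ^\<^sub>m j)"
    unfolding adjoint_U_gate unfolding U_gate_eq_tensor_mat by (rule tensor_mat_mult) auto
  thus "adjoint (U_gate n) * U_gate n = 1\<^sub>m (2^n)"
    by (simp add: adjoint_pow_mult_pow[OF cycle_gate_carrier adjoint_cycle_gate_mult] tensor_mat_one)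
qed

lemma U_gate_conj_pauli_string:
  "U_gate n * pauli_string n p * adjoint (U_gate n) = pauli_string n (\<lambda>k. (pauli_cycle ^^ k) (p k))"
proof -
  have "U_gate n * pauli_string n p * adjoint (U_gate n)
      = tensor_mat n (\<lambda>j. cycle_gate ^\<^sub>m j * pauli_mat (p j) * adjoint (cycle_gate ^\<^sub>m j))"
    unfolding adjoint_U_gate unfolding U_gate_eq_tensor_mat pauli_string_eq_tensor_mat
    by (rule tensor_mat_mult3) auto
  thus ?thesis
    by (simp add: cycle_gate_pow_conj_pauli pauli_string_eq_tensor_mat)
qed

lemma U_gate_conj_two_site:
  "U_gate n * two_site n A B j * adjoint (U_gate n)
   = two_site n ((pauli_cycle ^^ j) A) ((pauli_cycle ^^ Suc j) B) j"
  unfolding two_site_def U_gate_conj_pauli_string by (auto intro!: arg_cong[where f = "pauli_string n"])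

lemma U_gate_conj_a10_generators:
  "(\<lambda>a. U_gate n * a * adjoint (U_gate n)) `
     (\<Union>j\<in>{1..n-1}. {two_site n PX PY j, two_site n PY PZ j, two_site n PZ PX j})
   = (\<Union>j\<in>{1..n-1}. {two_site n PX PX j, two_site n PY PY j, two_site n PZ PZ j})"
proof -
  have "(\<lambda>a. U_gate n * a * adjoint (U_gate n)) ` {two_site n PX PY j, two_site n PY PZ j, two_site n PZ PX j}
      = {two_site n PX PX j, two_site n PY PY j, two_site n PZ PZ j}" for j
  proof -
    have "(\<lambda>a. U_gate n * a * adjoint (U_gate n)) ` {two_site n PX PY j, two_site n PY PZ j, two_site n PZ PX j}
        = (\<lambda>P. two_site n P P j) ` (pauli_cycle ^^ j) ` {PX, PY, PZ}"
      by (simp add: U_gate_conj_two_site funpow_swap1)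
    also have "\<dots> = {two_site n PX PX j, two_site n PY PY j, two_site n PZ PZ j}"
      by (simp only: funpow_pauli_cycle_image) simp
    finally show ?thesis .
  qed
  thus ?thesis by (simp add: image_UN)
qed

theorem mainTheorem13:
  fixes n :: nat
  assumes "n \<ge> 2"
  defines "U \<equiv> U_gate n"
  defines "\<phi> \<equiv> (\<lambda>a. U * a * adjoint U)"
  shows "bij_betw \<phi> (a10 n) (a7 n)
    \<and> (\<forall>a\<in>a10 n. \<forall>b\<in>a10 n. \<phi> (a + b) = \<phi> a + \<phi> b)
    \<and> (\<forall>a\<in>a10 n. \<forall>r::real. \<phi> (complex_of_real r \<cdot>\<^sub>m a) = complex_of_real r \<cdot>\<^sub>m \<phi> a)
    \<and> (\<forall>a\<in>a10 n. \<forall>b\<in>a10 n. \<phi> (commutator a b) = commutator (\<phi> a) (\<phi> b))"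
proof -
  interpret unitary_conjugation "2^n" "U_gate n"
    by (rule U_gate_unitary_conjugation)
  have \<phi>: "\<phi> = Ad"
    by (simp add: \<phi>_def U_def Ad_def fun_eq_iff)
  let ?S10 = "\<Union>j\<in>{1..n-1}. {two_site n PX PY j, two_site n PY PZ j, two_site n PZ PX j}"
  let ?S7 = "\<Union>j\<in>{1..n-1}. {two_site n PX PX j, two_site n PY PY j, two_site n PZ PZ j}"
  let ?G = "(\<lambda>P. \<i> \<cdot>\<^sub>m P) ` ?S10"
  have S10: "?S10 \<subseteq> carrier_mat (2^n) (2^n)" and G: "?G \<subseteq> carrier_mat (2^n) (2^n)"
    by (auto simp: two_site_def pauli_string_def)
  have "Ad ` ?S10 = ?S7"
    using U_gate_conj_a10_generators[of n] by (simp add: Ad_def[abs_def])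
  have "Ad ` ?G = (\<lambda>P. \<i> \<cdot>\<^sub>m Ad P) ` ?S10"
    unfolding image_image using S10 by (intro image_cong) (auto simp: Ad_smult)
  also have "\<dots> = (\<lambda>P. \<i> \<cdot>\<^sub>m P) ` ?S7"
    unfolding \<open>Ad ` ?S10 = ?S7\<close>[symmetric] image_image ..
  finally have a7: "a7 n = lie_closure (2^n) (Ad ` ?G)"
    by (simp add: a7_def pauli_lie_def)
  have a10: "a10 n = lie_closure (2^n) ?G"
    by (simp add: a10_def pauli_lie_def)
  show ?thesis
    unfolding \<phi> a10 a7
    using bij_betw_Ad_lie_closure[OF G] lie_closure_carrier[OF G]
    by (auto simp: Ad_add Ad_smult Ad_commutator)
qed

end
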